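(* Define a relation $\sim$ on $\mathbb{G}$ by declaring $(s,p)\sim(t,q)$ if and only if there exists $\varphi\in \mathrm{Aut}(\mathbb{D})$ with $H_\varphi(s,p)=(t,q)$. Then $\sim$ is an equivalence relation on $\mathbb{G}$. Moreover, writing $[(s,p)]$ for the equivalence class of $(s,p)\in\mathbb{G}$, the set of equivalence classes is $\{[(a,0)] : a\in[0,1)\}$.
   Context: $\mathbb{D}$ is the open unit disc in $\mathbb{C}$ and $\mathrm{Aut}(\mathbb{D})$ its group of holomorphic automorphisms. The symmetrized bidisc is $\mathbb{G}=\{(z_1+z_2,z_1z_2): z_1,z_2\in\mathbb{D}\}\subset\mathbb{C}^2$. For $\varphi\in\mathrm{Aut}(\mathbb{D})$, $H_\varphi:\mathbb{G}\to\mathbb{G}$ is defined by $H_\varphi(z_1+z_2,z_1z_2)=(\varphi(z_1)+\varphi(z_2),\varphi(z_1)\varphi(z_2))$. Note $(a,0)\in\mathbb{G}$ for every $a\in[0,1)$. *)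

theory Defs
  imports "HOL-Complex_Analysis.Complex_Analysis"
begin

definition aut_disc :: "(complex \<Rightarrow> complex) \<Rightarrow> bool" where
  "aut_disc \<phi> \<longleftrightarrow> \<phi> holomorphic_on ball 0 1 \<and> bij_betw \<phi> (ball 0 1) (ball 0 1)"

definition symG :: "(complex \<times> complex) set" where
  "symG = {(z1 + z2, z1 * z2) | z1 z2. z1 \<in> ball 0 1 \<and> z2 \<in> ball 0 1}"

definition H_aut :: "(complex \<Rightarrow> complex) \<Rightarrow> complex \<times> complex \<Rightarrow> complex \<times> complex" where
  "H_aut \<phi> x = (let (z1, z2) = (SOME (z1, z2). z1 \<in> ball 0 1 \<and> z2 \<in> ball 0 1 \<and> x = (z1 + z2, z1 * z2))
                 in (\<phi> z1 + \<phi> z2, \<phi> z1 * \<phi> z2))"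

definition G_rel :: "((complex \<times> complex) \<times> (complex \<times> complex)) set" where
  "G_rel = {(x, y). x \<in> symG \<and> y \<in> symG \<and> (\<exists>\<phi>. aut_disc \<phi> \<and> H_aut \<phi> x = y)}"

end

theory Submission
  imports Defs
begin

text \<open>
  The unordered pair of roots \<open>{z\<^sub>1, z\<^sub>2}\<close> of \<open>z\<^sup>2 - s z + p\<close> is determined by \<open>(s, p)\<close>,
  so \<open>H\<^sub>\<phi>\<close> is \<open>\<phi>\<close> acting on that pair; hence \<open>H\<^sub>\<psi> \<circ> H\<^sub>\<phi> = H\<^sub>\<psi>\<^sub>\<circ>\<^sub>\<phi>\<close>, and \<open>\<sim>\<close> is an
  equivalence relation because the automorphisms of the disc form a group. The Moebius map
  sending \<open>z\<^sub>2\<close> to \<open>0\<close>, followed by the rotation turning the image of \<open>z\<^sub>1\<close> into a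
  nonnegative real \<open>a\<close>, shows \<open>(z\<^sub>1 + z\<^sub>2, z\<^sub>1 z\<^sub>2) \<sim> (a, 0)\<close>.
\<close>

lemma sum_prod_eq_imp_same_pair:
  fixes z1 z2 w1 w2 :: "'a::idom"
  assumes "w1 + w2 = z1 + z2" "w1 * w2 = z1 * z2"
  shows "(w1 = z1 \<and> w2 = z2) \<or> (w1 = z2 \<and> w2 = z1)"
proof -
  have "(w1 - z1) * (w1 - z2) = w1 * w1 - w1 * (z1 + z2) + z1 * z2"
    by (simp add: algebra_simps)
  also have "\<dots> = w1 * w1 - w1 * (w1 + w2) + w1 * w2"
    using assms by simp
  also have "\<dots> = 0"
    by (simp add: algebra_simps)
  finally have "w1 = z1 \<or> w1 = z2" by simp
  then show ?thesis using assms(1) by auto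
qed

lemma H_aut_sum_prod:
  assumes "z1 \<in> ball 0 1" "z2 \<in> ball 0 1"
  shows "H_aut \<phi> (z1 + z2, z1 * z2) = (\<phi> z1 + \<phi> z2, \<phi> z1 * \<phi> z2)"
proof -
  define P where "P = (\<lambda>(w1, w2). w1 \<in> ball 0 1 \<and> w2 \<in> ball 0 1 \<and> (z1 + z2, z1 * z2) = (w1 + w2, w1 * w2))"
  obtain w1 w2 where w: "(SOME w. P w) = (w1, w2)" by fastforce
  have "P (z1, z2)" using assms by (simp add: P_def)
  then have "P (w1, w2)" unfolding w[symmetric] by (rule someI)
  then have "w1 + w2 = z1 + z2" "w1 * w2 = z1 * z2" by (auto simp: P_def)
  then have "(w1 = z1 \<and> w2 = z2) \<or> (w1 = z2 \<and> w2 = z1)" by (rule sum_prod_eq_imp_same_pair)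
  moreover have "H_aut \<phi> (z1 + z2, z1 * z2) = (\<phi> w1 + \<phi> w2, \<phi> w1 * \<phi> w2)"
    using w unfolding H_aut_def P_def by simp
  ultimately show ?thesis by (auto simp: algebra_simps)
qed

lemma symG_cases:
  assumes "x \<in> symG"
  obtains z1 z2 where "z1 \<in> ball 0 1" "z2 \<in> ball 0 1" "x = (z1 + z2, z1 * z2)"
  using assms unfolding symG_def by blast

lemma symG_zero_snd: "z \<in> ball 0 1 \<Longrightarrow> (z, 0) \<in> symG"
  unfolding symG_def by force

lemma aut_disc_id: "aut_disc (\<lambda>z. z)"
  unfolding aut_disc_def by (auto simp: bij_betw_def)

lemma aut_disc_image: "aut_disc \<phi> \<Longrightarrow> z \<in> ball 0 1 \<Longrightarrow> \<phi> z \<in> ball 0 1"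
  unfolding aut_disc_def bij_betw_def by auto

lemma aut_disc_comp:
  assumes "aut_disc \<phi>" "aut_disc \<psi>"
  shows "aut_disc (\<psi> \<circ> \<phi>)"
proof -
  have "\<phi> ` ball 0 1 = ball 0 1" using assms(1) by (simp add: aut_disc_def bij_betw_def)
  then show ?thesis using assms unfolding aut_disc_def
    by (auto intro: holomorphic_on_compose_gen bij_betw_trans)
qed

lemma aut_disc_inverse:
  assumes "aut_disc \<phi>"
  obtains \<psi> where "aut_disc \<psi>" "\<And>z. z \<in> ball 0 1 \<Longrightarrow> \<psi> (\<phi> z) = z"
proof -
  have hol: "\<phi> holomorphic_on ball 0 1" and inj: "inj_on \<phi> (ball 0 1)"
    and onto: "\<phi> ` ball 0 1 = ball 0 1"
    using assms by (auto simp: aut_disc_def bij_betw_def)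
  obtain \<psi> where hol_inv: "\<psi> holomorphic_on \<phi> ` ball 0 1"
    and inv: "\<And>z. z \<in> ball 0 1 \<Longrightarrow> \<psi> (\<phi> z) = z"
    using holomorphic_has_inverse[OF hol open_ball inj] by blast
  have preimage: "\<exists>z \<in> ball 0 1. w = \<phi> z" if "w \<in> ball 0 1" for w
    using that onto by blast
  have "bij_betw \<psi> (ball 0 1) (ball 0 1)"
  proof (rule bij_betwI[where g = \<phi>])
    show "\<psi> \<in> ball 0 1 \<rightarrow> ball 0 1"
      using preimage inv by fastforce
    show "\<phi> \<in> ball 0 1 \<rightarrow> ball 0 1"
      using onto by blast
    show "\<phi> (\<psi> w) = w" if "w \<in> ball 0 1" for w
      using preimage[OF that] inv by auto
  qed (rule inv)
  with hol_inv onto have "aut_disc \<psi>" by (simp add: aut_disc_def)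
  with inv show ?thesis using that by blast
qed

lemma aut_disc_Moebius:
  assumes "norm a < 1"
  shows "aut_disc (Moebius_function 0 a)"
proof -
  have "bij_betw (Moebius_function 0 a) (ball 0 1) (ball 0 1)"
  proof (rule bij_betwI[where g = "Moebius_function 0 (-a)"])
    show "Moebius_function 0 a \<in> ball 0 1 \<rightarrow> ball 0 1"
      "Moebius_function 0 (-a) \<in> ball 0 1 \<rightarrow> ball 0 1"
      using Moebius_function_norm_lt_1 assms by auto
  qed (use Moebius_function_compose assms in auto)
  then show ?thesis using Moebius_function_holomorphic[OF assms] by (simp add: aut_disc_def)
qed

lemma aut_disc_rotation:
  assumes "norm c = 1"
  shows "aut_disc (\<lambda>z. c * z)"
proof -
  have "bij_betw (\<lambda>z. c * z) (ball 0 1) (ball 0 1)"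
    by (rule bij_betwI[where g = "\<lambda>z. z / c"]) (use assms in \<open>auto simp: norm_mult norm_divide\<close>)
  then show ?thesis by (simp add: aut_disc_def holomorphic_intros)
qed

lemma G_rel_sum_prod:
  assumes "aut_disc \<phi>" "z1 \<in> ball 0 1" "z2 \<in> ball 0 1"
  shows "((z1 + z2, z1 * z2), (\<phi> z1 + \<phi> z2, \<phi> z1 * \<phi> z2)) \<in> G_rel"
  using assms aut_disc_image[OF assms(1)] H_aut_sum_prod[of z1 z2 \<phi>]
  unfolding G_rel_def symG_def by blast

lemma G_rel_sum_prodE:
  assumes "(x, y) \<in> G_rel" "z1 \<in> ball 0 1" "z2 \<in> ball 0 1" "x = (z1 + z2, z1 * z2)"
  obtains \<phi> where "aut_disc \<phi>" "y = (\<phi> z1 + \<phi> z2, \<phi> z1 * \<phi> z2)"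
  using assms H_aut_sum_prod unfolding G_rel_def by blast

lemma equiv_G_rel: "equiv symG G_rel"
proof (rule equivI)
  show "G_rel \<subseteq> symG \<times> symG" unfolding G_rel_def by auto
  show "refl_on symG G_rel"
    by (rule refl_onI) (auto elim!: symG_cases intro: G_rel_sum_prod[OF aut_disc_id, simplified])
  show "sym G_rel"
  proof (rule symI)
    fix x y assume xy: "(x, y) \<in> G_rel"
    then obtain z1 z2 where z: "z1 \<in> ball 0 1" "z2 \<in> ball 0 1" "x = (z1 + z2, z1 * z2)"
      unfolding G_rel_def by (auto elim: symG_cases)
    obtain \<phi> where \<phi>: "aut_disc \<phi>" "y = (\<phi> z1 + \<phi> z2, \<phi> z1 * \<phi> z2)"
      using G_rel_sum_prodE[OF xy z] .
    obtain \<psi> where \<psi>: "aut_disc \<psi>" "\<And>z. z \<in> ball 0 1 \<Longrightarrow> \<psi> (\<phi> z) = z"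
      using aut_disc_inverse[OF \<phi>(1)] by blast
    show "(y, x) \<in> G_rel"
      using G_rel_sum_prod[OF \<psi>(1) aut_disc_image[OF \<phi>(1) z(1)] aut_disc_image[OF \<phi>(1) z(2)]]
      by (simp add: \<phi>(2) \<psi>(2)[OF z(1)] \<psi>(2)[OF z(2)] z(3))
  qed
  show "trans G_rel"
  proof (rule transI)
    fix x y w assume xy: "(x, y) \<in> G_rel" and yw: "(y, w) \<in> G_rel"
    then obtain z1 z2 where z: "z1 \<in> ball 0 1" "z2 \<in> ball 0 1" "x = (z1 + z2, z1 * z2)"
      unfolding G_rel_def by (auto elim: symG_cases)
    obtain \<phi> where \<phi>: "aut_disc \<phi>" "y = (\<phi> z1 + \<phi> z2, \<phi> z1 * \<phi> z2)"
      using G_rel_sum_prodE[OF xy z] .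
    obtain \<psi> where \<psi>: "aut_disc \<psi>" "w = (\<psi> (\<phi> z1) + \<psi> (\<phi> z2), \<psi> (\<phi> z1) * \<psi> (\<phi> z2))"
      using G_rel_sum_prodE[OF yw aut_disc_image[OF \<phi>(1) z(1)] aut_disc_image[OF \<phi>(1) z(2)] \<phi>(2)] .
    show "(x, w) \<in> G_rel"
      using G_rel_sum_prod[OF aut_disc_comp[OF \<phi>(1) \<psi>(1)] z(1,2)] by (simp add: z(3) \<psi>(2))
  qed
qed

lemma cis_minus_Arg_mult: "cis (- Arg u) * u = complex_of_real (norm u)"
proof -
  have "u = complex_of_real (norm u) * cis (Arg u)"
    using rcis_cmod_Arg[of u] by (simp add: rcis_def)
  then have "cis (- Arg u) * u = complex_of_real (norm u) * (cis (- Arg u) * cis (Arg u))"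
    by (metis mult.left_commute)
  then show ?thesis by (simp add: cis_mult)
qed

lemma G_rel_real_representative:
  assumes "x \<in> symG"
  obtains a where "0 \<le> a" "a < 1" "(x, (complex_of_real a, 0)) \<in> G_rel"
proof -
  obtain z1 z2 where z: "z1 \<in> ball 0 1" "z2 \<in> ball 0 1" "x = (z1 + z2, z1 * z2)"
    using assms by (rule symG_cases)
  define m where "m = Moebius_function 0 z2"
  define c where "c = cis (- Arg (m z1))"
  have m: "aut_disc m" using aut_disc_Moebius z(2) by (simp add: m_def)
  have "m z1 \<in> ball 0 1" by (rule aut_disc_image[OF m z(1)])
  have "m z2 = 0" by (simp add: m_def Moebius_function_eq_zero)
  have "aut_disc ((\<lambda>z. c * z) \<circ> m)"
    using aut_disc_comp[OF m aut_disc_rotation] by (simp add: c_def)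
  from G_rel_sum_prod[OF this z(1,2)]
  have "(x, (complex_of_real (norm (m z1)), 0)) \<in> G_rel"
    using cis_minus_Arg_mult \<open>m z2 = 0\<close> by (simp add: z(3) c_def)
  with \<open>m z1 \<in> ball 0 1\<close> show ?thesis using that[of "norm (m z1)"] by simp
qed

lemma quotient_eq_classes_of_representatives:
  assumes "equiv A r" "S \<subseteq> A" "\<And>x. x \<in> A \<Longrightarrow> \<exists>s\<in>S. (x, s) \<in> r"
  shows "A // r = (\<lambda>s. r `` {s}) ` S"
proof
  show "A // r \<subseteq> (\<lambda>s. r `` {s}) ` S"
  proof
    fix X assume "X \<in> A // r"
    then obtain x where "x \<in> A" "X = r `` {x}" by (rule quotientE)
    with assms(3) obtain s where "s \<in> S" "(x, s) \<in> r" by blast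
    then show "X \<in> (\<lambda>s. r `` {s}) ` S"
      using equiv_class_eq[OF assms(1)] \<open>X = r `` {x}\<close> by blast
  qed
  show "(\<lambda>s. r `` {s}) ` S \<subseteq> A // r"
    using assms(2) by (auto intro: quotientI)
qed

theorem theorem2p1:
  shows "equiv symG G_rel \<and>
         symG // G_rel = {G_rel `` {(complex_of_real a, 0)} | a. 0 \<le> a \<and> a < 1}"
proof
  show "equiv symG G_rel" by (rule equiv_G_rel)
  let ?S = "(\<lambda>a. (complex_of_real a, 0)) ` {0..<1}"
  have "?S \<subseteq> symG" by (auto intro: symG_zero_snd)
  moreover have "\<exists>s\<in>?S. (x, s) \<in> G_rel" if "x \<in> symG" for x
    using G_rel_real_representative[OF that] by (metis atLeastLessThan_iff image_eqI)
  ultimately have "symG // G_rel = (\<lambda>s. G_rel `` {s}) ` ?S"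
    by (rule quotient_eq_classes_of_representatives[OF equiv_G_rel])
  then show "symG // G_rel = {G_rel `` {(complex_of_real a, 0)} | a. 0 \<le> a \<and> a < 1}"
    by auto
qed

end
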